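(* Let $h(x)$ and $h'(x)$ be scattered polynomials in $\mathbb{F}_{q^n}[x]$ in standard form, both $\mathrm{GL}$-equivalent to a scattered polynomial $f(x)$. Then there exist $a,b\in\mathbb{F}_{q^n}^*$ such that $h'(x)=ah(bx)$ for all $x$, or $h'(x)=ah^{-1}(bx)$ for all $x$.
   Context: $q$ is a prime power, $n>1$. A $q$-polynomial $h(x)=\sum_{i=0}^{n-1}b_ix^{q^i}\in\mathbb{F}_{q^n}[x]$ is scattered if for all $y,z\in\mathbb{F}_{q^n}$, $zh(y)-yh(z)=0$ implies $y,z$ are $\mathbb{F}_q$-linearly dependent. $U_h=\{(x,h(x))\colon x\in\mathbb{F}_{q^n}\}$; two $q$-polynomials $f,g$ are $\mathrm{GL}$-equivalent if $U_fA=U_g$ for some $A\in\mathrm{GL}(2,q^n)$, where $A$ acts on row vectors by right multiplication. With $\Delta_h=\{(i-j)\bmod n\colon b_ib_j\neq0,\ i\neq j\}\cup\{n\}$ and $t_h=\gcd(\Delta_h)$, $h$ is in standard form if $t_h>1$. A scattered polynomial in standard form is a bijection of $\mathbb{F}_{q^n}$, and $h^{-1}$ denotes its inverse map (itself an $\mathbb{F}_q$-linear map of $\mathbb{F}_{q^n}$). *)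

theory Defs
  imports "HOL-Computational_Algebra.Primes" "HOL-Library.Cardinality"
begin

definition prime_power :: "nat \<Rightarrow> bool" where
  "prime_power q \<longleftrightarrow> (\<exists>p k. prime p \<and> k > 0 \<and> q = p ^ k)"

definition subfield_Fq :: "nat \<Rightarrow> 'a::field set" where
  "subfield_Fq q = {x. x ^ q = x}"

definition qpoly_eval :: "nat \<Rightarrow> nat \<Rightarrow> (nat \<Rightarrow> 'a::field) \<Rightarrow> 'a \<Rightarrow> 'a" where
  "qpoly_eval q n b x = (\<Sum>i<n. b i * x ^ (q ^ i))"

definition Fq_lin_dep :: "nat \<Rightarrow> 'a::field \<Rightarrow> 'a \<Rightarrow> bool" where
  "Fq_lin_dep q y z \<longleftrightarrow>
     (\<exists>l m. l \<in> subfield_Fq q \<and> m \<in> subfield_Fq q \<and> (l \<noteq> 0 \<or> m \<noteq> 0) \<and> l * y + m * z = 0)"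

definition scattered :: "nat \<Rightarrow> nat \<Rightarrow> (nat \<Rightarrow> 'a::field) \<Rightarrow> bool" where
  "scattered q n b \<longleftrightarrow>
     (\<forall>y z. z * qpoly_eval q n b y - y * qpoly_eval q n b z = 0 \<longrightarrow> Fq_lin_dep q y z)"

definition U_set :: "nat \<Rightarrow> nat \<Rightarrow> (nat \<Rightarrow> 'a::field) \<Rightarrow> ('a \<times> 'a) set" where
  "U_set q n b = {(x, qpoly_eval q n b x) | x. True}"

text \<open>Right multiplication of row vector (u,v) by the matrix [[a,b],[c,d]].\<close>
definition mat_act :: "'a::field \<times> 'a \<times> 'a \<times> 'a \<Rightarrow> 'a \<times> 'a \<Rightarrow> 'a \<times> 'a" where
  "mat_act M uv = (case M of (a, b, c, d) \<Rightarrow> case uv of (u, v) \<Rightarrow> (u * a + v * c, u * b + v * d))"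

definition GL_equiv :: "nat \<Rightarrow> nat \<Rightarrow> (nat \<Rightarrow> 'a::field) \<Rightarrow> (nat \<Rightarrow> 'a) \<Rightarrow> bool" where
  "GL_equiv q n f g \<longleftrightarrow>
     (\<exists>a b c d. a * d - b * c \<noteq> 0 \<and> mat_act (a, b, c, d) ` U_set q n f = U_set q n g)"

definition Delta :: "nat \<Rightarrow> (nat \<Rightarrow> 'a::field) \<Rightarrow> nat set" where
  "Delta n b = {(i + n - j) mod n | i j. i < n \<and> j < n \<and> i \<noteq> j \<and> b i * b j \<noteq> 0} \<union> {n}"

definition t_idx :: "nat \<Rightarrow> (nat \<Rightarrow> 'a::field) \<Rightarrow> nat" where
  "t_idx n b = Gcd (Delta n b)"

definition standard_form :: "nat \<Rightarrow> (nat \<Rightarrow> 'a::field) \<Rightarrow> bool" where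
  "standard_form n b \<longleftrightarrow> t_idx n b > 1"

end

(* Let t = t_h and let s be an index with h_s \<noteq> 0. Since all exponents with nonzero coefficient
   are congruent to s modulo t, h is semilinear over the subfield F_{q^t}: h(l x) = l^{q^s} h(x).
   Because h is scattered, l \<mapsto> l^{q^s} is not the identity on F_{q^t}, so U_h is stabilised by a
   non-scalar diagonal matrix diag(l, l^{q^s}).

   For n \<ge> 3, every matrix stabilising U_h is diagonal. Combining a stabiliser with the
   semilinearity gives h(g h(x)) = c x, and (g, c) \<noteq> 0 would force t = 2 and c g = l^{q+1} for
   some l in F_{q^2}. Then x \<mapsto> l x + g h(x) would be F_q-linear with image in one eigenspace of h
   and kernel in another. Scatteredness makes both F_q-lines, giving q^n \<le> q^2.

   If A maps U_h onto U_h', then conjugating the diagonal stabiliser of U_h' by A gives a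
   stabiliser of U_h. So A is diagonal or antidiagonal, which means h'(x) = a h(b x) or
   h'(x) = a h^{-1}(b x). For n = 2 both polynomials are monomials h_1 x^q. *)

theory Submission
  imports Defs "HOL-Number_Theory.Residues" "HOL-Algebra.Algebraic_Closure_Type"
begin

(* Otherwise HOL-Algebra would shadow the number-theoretic prime and Multiplicative_Group.mult_of,
   and its group-inverse syntax would capture the inv of the theorem statement. *)
hide_const (open) Divisibility.prime Ring_Divisibility.mult_of
unbundle no m_inv_syntax

section \<open>Finite fields\<close>

lemma power_minus_one_dvd_iff:
  fixes q t m :: nat
  assumes "q \<ge> 2" "t > 0"
  shows "(q ^ t - 1) dvd (q ^ m - 1) \<longleftrightarrow> t dvd m"
proof -
  let ?P = "q ^ t - 1" and ?r = "m mod t"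
  have pos: "1 \<le> q ^ k" for k
    using assms(1) by simp
  have "[q ^ t = 1] (mod ?P)"
    using pos by (simp add: cong_altdef_nat)
  then have "[(q ^ t) ^ (m div t) * q ^ ?r = 1 ^ (m div t) * q ^ ?r] (mod ?P)"
    by (intro cong_mult cong_pow) auto
  moreover have "(q ^ t) ^ (m div t) * q ^ ?r = q ^ m"
    by (metis mult_div_mod_eq power_add power_mult)
  ultimately have "[q ^ m = q ^ ?r] (mod ?P)"
    by simp
  then have "?P dvd q ^ m - 1 \<longleftrightarrow> ?P dvd q ^ ?r - 1"
    using pos by (metis cong_altdef_nat cong_sym cong_trans)
  also have "\<dots> \<longleftrightarrow> q ^ ?r - 1 = 0"
  proof
    have "q ^ ?r - 1 < ?P"
      using assms pos[of ?r] by (simp add: diff_less_mono)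
    then show "?P dvd q ^ ?r - 1 \<Longrightarrow> q ^ ?r - 1 = 0"
      using nat_dvd_not_less by blast
  qed simp
  also have "\<dots> \<longleftrightarrow> q ^ ?r = 1"
    using pos[of ?r] by linarith
  also have "\<dots> \<longleftrightarrow> t dvd m"
    using assms(1) by (simp add: power_eq_1_iff dvd_eq_mod_eq_0)
  finally show ?thesis .
qed

lemma finite_field_primitive_element:
  obtains g :: "'a::{finite,field}"
  where "g \<noteq> 0" and "\<And>x. x \<noteq> 0 \<Longrightarrow> \<exists>i. x = g ^ i" and "\<And>m. g ^ m = 1 \<longleftrightarrow> (CARD('a) - 1) dvd m"
proof -
  let ?R = "ring_of_type_algebra :: 'a ring"
  let ?G = "mult_of ?R"
  interpret field ?R by (rule field_from_type_algebra)
  interpret G: group ?G by (rule field_mult_group)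
  have pow_R: "x [^]\<^bsub>?R\<^esub> m = x ^ m" for x :: 'a and m :: nat
    by (induction m) (simp_all add: ring_of_type_algebra_def nat_pow_def)
  have pow_G: "x [^]\<^bsub>?G\<^esub> m = x ^ m" for x :: 'a and m :: nat
    by (simp add: Multiplicative_Group.nat_pow_mult_of pow_R)
  have carrier: "carrier ?G = UNIV - {0}"
    by (simp add: ring_of_type_algebra_def)
  have fin: "finite (carrier ?R)"
    by (simp add: ring_of_type_algebra_def)
  obtain g where g: "g \<in> carrier ?G" and gen: "carrier ?G = {g [^]\<^bsub>?R\<^esub> i | i::nat. i \<in> UNIV}"
    using finite_field_mult_group_has_gen[OF fin] by blast
  have "G.ord g = card (generate ?G {g})"
    by (rule G.generate_pow_card[OF g])
  also have "generate ?G {g} = carrier ?G"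
    using G.generate_pow_on_finite_carrier[OF _ g] gen fin
    by (simp add: Multiplicative_Group.nat_pow_mult_of)
  also have "card \<dots> = CARD('a) - 1"
    unfolding carrier by (simp add: card_Diff_singleton)
  finally have ord: "G.ord g = CARD('a) - 1" .
  have one: "\<one>\<^bsub>?G\<^esub> = 1"
    by (simp add: ring_of_type_algebra_def)
  show thesis
  proof
    show "g \<noteq> 0"
      using g unfolding carrier by simp
  next
    fix x :: 'a assume "x \<noteq> 0"
    then have "x \<in> carrier ?G"
      unfolding carrier by simp
    then show "\<exists>i. x = g ^ i"
      using gen by (auto simp: pow_R)
  next
    show "g ^ m = 1 \<longleftrightarrow> (CARD('a) - 1) dvd m" for m
      using G.pow_eq_id[OF g, of m] by (simp only: pow_G one ord)
  qed
qed

lemma power_eq_self_iff: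
  fixes x :: "'a::field"
  assumes "x \<noteq> 0" "k > 0"
  shows "x ^ k = x \<longleftrightarrow> x ^ (k - 1) = 1"
proof -
  have "x ^ k = x * x ^ (k - 1)"
    using assms(2) by (simp flip: power_Suc)
  then show ?thesis
    using assms(1) by auto
qed

lemma power_power_fixed:
  fixes x :: "'a::monoid_mult"
  assumes "x ^ Q = x"
  shows "x ^ (Q ^ k) = x"
proof (induction k)
  case (Suc k)
  then show ?case
    using assms by (simp add: power_mult mult.commute)
qed simp

lemma subfield_Fq_power_closed:
  assumes "x \<in> subfield_Fq Q"
  shows "x ^ k \<in> subfield_Fq Q"
proof -
  have "(x ^ k) ^ Q = (x ^ Q) ^ k"
    by (simp add: mult.commute flip: power_mult)
  then show ?thesis
    using assms by (simp add: subfield_Fq_def)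
qed

lemma subfield_Fq_mono:
  assumes "s dvd t"
  shows "subfield_Fq (q ^ s) \<subseteq> subfield_Fq (q ^ t)"
proof
  fix x :: 'a assume "x \<in> subfield_Fq (q ^ s)"
  moreover obtain k where "t = s * k"
    using assms by blast
  ultimately show "x \<in> subfield_Fq (q ^ t)"
    by (simp add: subfield_Fq_def power_mult power_power_fixed)
qed

lemma subfield_Fq_power_mod:
  assumes "x \<in> subfield_Fq (q ^ t)"
  shows "x ^ (q ^ i) = x ^ (q ^ (i mod t))"
proof -
  have "x ^ (q ^ (t * (i div t))) = x"
    using assms by (simp add: subfield_Fq_def power_mult power_power_fixed)
  then have "x ^ (q ^ (t * (i div t)) * q ^ (i mod t)) = x ^ (q ^ (i mod t))"
    by (simp add: power_mult)
  then show ?thesis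
    by (simp flip: power_add)
qed

lemma card_subfield_Fq_le:
  assumes "Q \<ge> 2"
  shows "card (subfield_Fq Q :: 'a::field set) \<le> Q"
proof -
  let ?p = "monom 1 Q + [:0, -1:] :: 'a poly"
  have deg: "degree ?p = Q"
    using assms by (subst degree_add_eq_left) (simp_all add: degree_monom_eq)
  then have "?p \<noteq> 0"
    using assms by auto
  moreover have "subfield_Fq Q = {x. poly ?p x = 0}"
    by (simp add: subfield_Fq_def poly_monom)
  ultimately show ?thesis
    using card_poly_roots_bound[of ?p] deg by simp
qed

locale qn_field =
  fixes q n :: nat and field_type :: "'a::{finite,field} itself"
  assumes prime_power_q: "prime_power q" and n_gt_1: "n > 1" and card_field: "CARD('a) = q ^ n"
begin

lemma q_ge_2: "q \<ge> 2"
proof -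
  obtain p k where p: "prime p" "k > 0" "q = p ^ k"
    using prime_power_q unfolding prime_power_def by blast
  have "2 \<le> p"
    using p(1) by (rule prime_ge_2_nat)
  also have "p \<le> p ^ k"
    using p(2) \<open>2 \<le> p\<close> by (simp add: self_le_power)
  finally show ?thesis
    using p(3) by simp
qed

lemma prime_CHAR: "prime CHAR('a)"
proof (rule prime_CHAR_semidom)
  show "CHAR('a) > 0"
    by (rule finite_imp_CHAR_pos) simp
qed

lemma q_is_CHAR_power: "\<exists>j. q = CHAR('a) ^ j"
proof -
  obtain p k where p: "prime p" "q = p ^ k"
    using prime_power_q unfolding prime_power_def by blast
  have "CHAR('a) dvd p ^ (k * n)"
    using CHAR_dvd_CARD[where 'a = 'a] card_field p(2) by (simp add: power_mult)
  then have "CHAR('a) dvd p"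
    using prime_CHAR prime_dvd_power by blast
  then have "CHAR('a) = p"
    using prime_CHAR p(1) by (simp add: primes_dvd_imp_eq)
  then show ?thesis
    using p(2) by blast
qed

lemma frobenius_add: "((x::'a) + y) ^ (q ^ i) = x ^ (q ^ i) + y ^ (q ^ i)"
proof -
  obtain j where "q = CHAR('a) ^ j"
    using q_is_CHAR_power by blast
  then show ?thesis
    using freshmans_dream'[OF prime_CHAR, of "q ^ i" "j * i" x y] by (simp add: power_mult)
qed

lemma frobenius_diff: "((x::'a) - y) ^ (q ^ i) = x ^ (q ^ i) - y ^ (q ^ i)"
  using frobenius_add[of "x - y" y i] by simp

lemma primitive_element:
  obtains g :: 'a where "g \<noteq> 0" "\<And>x. x \<noteq> 0 \<Longrightarrow> \<exists>i. x = g ^ i" "\<And>k. g ^ k = 1 \<longleftrightarrow> (q ^ n - 1) dvd k"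
proof -
  obtain g :: 'a where g: "g \<noteq> 0" "\<And>x. x \<noteq> 0 \<Longrightarrow> \<exists>i. x = g ^ i"
    "\<And>m. g ^ m = 1 \<longleftrightarrow> (CARD('a) - 1) dvd m"
    using finite_field_primitive_element[where 'a = 'a] by metis
  show thesis
    using that[OF g(1,2)] g(3) card_field by simp
qed

lemma subfield_Fq_subset_imp_dvd:
  assumes "t dvd n" "t > 0" and sub: "subfield_Fq (q ^ t) \<subseteq> (subfield_Fq (q ^ m) :: 'a set)"
  shows "t dvd m"
proof -
  obtain g :: 'a where "g \<noteq> 0" and g: "\<And>k. g ^ k = 1 \<longleftrightarrow> (q ^ n - 1) dvd k"
    using primitive_element by metis
  have "(q ^ t - 1) dvd (q ^ n - 1)"
    using power_minus_one_dvd_iff[of q t n] assms(1,2) q_ge_2 by simp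
  then obtain e where e: "q ^ n - 1 = (q ^ t - 1) * e" ..
  have "q ^ n - 1 \<noteq> 0"
    using q_ge_2 n_gt_1 one_less_power[of q n] by simp
  then have "e \<noteq> 0"
    using e by (metis mult_0_right)
  define w where "w = g ^ e"
  have "w \<noteq> 0"
    using \<open>g \<noteq> 0\<close> by (simp add: w_def)
  have "w ^ (q ^ t - 1) = g ^ (q ^ n - 1)"
    unfolding w_def e by (metis mult.commute power_mult)
  then have "w ^ (q ^ t - 1) = 1"
    by (simp add: g)
  then have "w \<in> subfield_Fq (q ^ t)"
    using \<open>w \<noteq> 0\<close> q_ge_2 by (simp add: subfield_Fq_def power_eq_self_iff)
  then have "w \<in> subfield_Fq (q ^ m)"
    using sub by blast
  then have "w ^ (q ^ m - 1) = 1"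
    using \<open>w \<noteq> 0\<close> q_ge_2 by (simp add: subfield_Fq_def power_eq_self_iff)
  then have "(q ^ n - 1) dvd e * (q ^ m - 1)"
    unfolding w_def by (simp add: g flip: power_mult)
  then have "(q ^ t - 1) * e dvd (q ^ m - 1) * e"
    unfolding e by (simp add: mult.commute)
  then have "(q ^ t - 1) dvd (q ^ m - 1)"
    using \<open>e \<noteq> 0\<close> by simp
  then show ?thesis
    using power_minus_one_dvd_iff[of q t m] q_ge_2 assms(2) by simp
qed

lemma exists_in_subfield_not_Fq:
  assumes "d dvd n" "d \<ge> 2"
  shows "\<exists>l::'a \<in> subfield_Fq (q ^ d). l \<notin> subfield_Fq q"
  using subfield_Fq_subset_imp_dvd[of d 1] assms by auto

lemma norm_onto_Fq:
  assumes "2 dvd n" "c \<in> subfield_Fq q" "c \<noteq> (0::'a)"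
  shows "\<exists>l \<in> subfield_Fq (q ^ 2). l ^ (q + 1) = c"
proof -
  obtain g :: 'a where "g \<noteq> 0" and gen: "\<And>x. x \<noteq> 0 \<Longrightarrow> \<exists>i. x = g ^ i"
    and g: "\<And>k. g ^ k = 1 \<longleftrightarrow> (q ^ n - 1) dvd k"
    using primitive_element by metis
  have "(q ^ 2 - 1) dvd (q ^ n - 1)"
    using power_minus_one_dvd_iff[of q 2 n] assms(1) q_ge_2 by simp
  then obtain e where e: "q ^ n - 1 = (q ^ 2 - 1) * e" ..
  have q_sq: "q ^ 2 - 1 = (q + 1) * (q - 1)"
    by (cases q) (simp_all add: power2_eq_square)
  obtain i where i: "c = g ^ i"
    using gen assms(3) by blast
  have "c ^ (q - 1) = 1"
    using assms(2,3) q_ge_2 by (simp add: subfield_Fq_def power_eq_self_iff)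
  then have "g ^ (i * (q - 1)) = 1"
    by (simp add: i power_mult)
  then have "(q ^ n - 1) dvd i * (q - 1)"
    by (simp add: g)
  then have "(e * (q + 1)) * (q - 1) dvd i * (q - 1)"
    unfolding e q_sq by (simp only: ac_simps)
  then have "e * (q + 1) dvd i"
    using q_ge_2 by simp
  then obtain j where j: "i = e * (q + 1) * j" ..
  have "(g ^ (e * j)) ^ (q + 1) = c"
    unfolding i j by (metis mult.commute mult.left_commute power_mult)
  moreover have "(g ^ (e * j)) ^ (q ^ 2 - 1) = (g ^ (q ^ n - 1)) ^ j"
    unfolding e by (metis mult.commute mult.left_commute power_mult)
  then have "(g ^ (e * j)) ^ (q ^ 2 - 1) = 1"
    using g[of "q ^ n - 1"] by simp
  then have "g ^ (e * j) \<in> subfield_Fq (q ^ 2)"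
    using \<open>g \<noteq> 0\<close> q_ge_2 by (simp add: subfield_Fq_def power_eq_self_iff)
  ultimately show ?thesis
    by blast
qed

lemma zero_in_Fq: "(0::'a) \<in> subfield_Fq q"
  using q_ge_2 by (simp add: subfield_Fq_def)

lemma Fq_lin_dep_imp_multiple:
  assumes "Fq_lin_dep q y z" "z \<noteq> (0::'a)"
  shows "\<exists>r \<in> subfield_Fq q. y = r * z"
proof -
  obtain l m where l: "l \<in> subfield_Fq q" and m: "m \<in> subfield_Fq q"
    and "l \<noteq> 0 \<or> m \<noteq> 0" and lin: "l * y + m * z = 0"
    using assms(1) unfolding Fq_lin_dep_def by blast
  then have "l \<noteq> 0"
    using assms(2) by auto
  have "(0 - m) ^ (q ^ 1) = 0 ^ (q ^ 1) - m ^ (q ^ 1)"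
    by (rule frobenius_diff)
  then have neg: "(- m) ^ q = - m"
    using m q_ge_2 by (simp add: subfield_Fq_def zero_power)
  define r where "r = - m / l"
  have "r ^ q = r"
    unfolding r_def power_divide neg using l by (simp add: subfield_Fq_def)
  moreover have "y = r * z"
    using lin \<open>l \<noteq> 0\<close> unfolding r_def by (simp add: field_simps add_eq_0_iff2)
  ultimately show ?thesis
    by (auto simp: subfield_Fq_def)
qed

lemma qpoly_eval_add: "qpoly_eval q n b (x + y) = qpoly_eval q n b x + qpoly_eval q n b (y::'a)"
  unfolding qpoly_eval_def by (simp add: frobenius_add distrib_left sum.distrib)

lemma qpoly_eval_diff: "qpoly_eval q n b (x - y) = qpoly_eval q n b x - qpoly_eval q n b (y::'a)"
  unfolding qpoly_eval_def by (simp add: frobenius_diff right_diff_distrib sum_subtractf)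

lemma qpoly_eval_zero: "qpoly_eval q n b (0::'a) = 0"
  using qpoly_eval_diff[of b 0 0] by simp

lemma qpoly_eval_Fq_mult:
  assumes "r \<in> subfield_Fq q"
  shows "qpoly_eval q n b (r * x) = r * qpoly_eval q n b (x::'a)"
proof -
  have "r ^ (q ^ i) = r" for i
    using assms power_power_fixed[of r q] by (simp add: subfield_Fq_def)
  then show ?thesis
    unfolding qpoly_eval_def by (simp add: power_mult_distrib sum_distrib_left mult_ac)
qed

lemma pairwise_dep_imp_line:
  assumes "S \<noteq> {}" and dep: "\<And>y z. y \<in> S \<Longrightarrow> z \<in> S \<Longrightarrow> Fq_lin_dep q y (z::'a)"
  shows "\<exists>x0 \<in> S. S \<subseteq> (\<lambda>r. r * x0) ` subfield_Fq q"
proof (cases "S \<subseteq> {0}")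
  case True
  with assms(1) have "S = {0}"
    by blast
  then show ?thesis
    using zero_in_Fq by force
next
  case False
  then obtain x0 where x0: "x0 \<in> S" "x0 \<noteq> 0"
    by blast
  have "S \<subseteq> (\<lambda>r. r * x0) ` subfield_Fq q"
  proof
    fix y assume "y \<in> S"
    then have "\<exists>r \<in> subfield_Fq q. y = r * x0"
      using Fq_lin_dep_imp_multiple dep x0 by simp
    then show "y \<in> (\<lambda>r. r * x0) ` subfield_Fq q"
      by blast
  qed
  then show ?thesis
    using x0(1) by blast
qed

lemma n_le_2_if_kernel_and_image_collinear:
  fixes \<phi> :: "'a \<Rightarrow> 'a"
  assumes diff: "\<And>x y. \<phi> (x - y) = \<phi> x - \<phi> y"
    and smult: "\<And>r x. r \<in> subfield_Fq q \<Longrightarrow> \<phi> (r * x) = r * \<phi> x"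
    and image_dep: "\<And>x y. Fq_lin_dep q (\<phi> x) (\<phi> y)"
    and kernel_dep: "\<And>x y. \<phi> x = 0 \<Longrightarrow> \<phi> y = 0 \<Longrightarrow> Fq_lin_dep q x y"
  shows "n \<le> 2"
proof -
  let ?F = "subfield_Fq q :: 'a set"
  have "\<exists>w \<in> range \<phi>. range \<phi> \<subseteq> (\<lambda>r. r * w) ` ?F"
    by (rule pairwise_dep_imp_line) (auto simp: image_dep)
  then obtain z0 where image: "range \<phi> \<subseteq> (\<lambda>r. r * \<phi> z0) ` ?F"
    by blast
  have "\<phi> 0 = 0"
    using diff[of 0 0] by simp
  then have "\<exists>x0 \<in> {x. \<phi> x = 0}. {x. \<phi> x = 0} \<subseteq> (\<lambda>r. r * x0) ` ?F"
    by (intro pairwise_dep_imp_line) (auto simp: kernel_dep)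
  then obtain x0 where kernel: "{x. \<phi> x = 0} \<subseteq> (\<lambda>r. r * x0) ` ?F"
    by blast
  let ?comb = "\<lambda>(r1, r2). r1 * x0 + r2 * z0"
  have cover: "x \<in> ?comb ` (?F \<times> ?F)" for x
  proof -
    obtain r2 where r2: "r2 \<in> ?F" "\<phi> x = r2 * \<phi> z0"
      using image by blast
    then have "\<phi> (x - r2 * z0) = 0"
      by (simp add: diff smult)
    then obtain r1 where r1: "r1 \<in> ?F" "x - r2 * z0 = r1 * x0"
      using kernel by blast
    then have "x = ?comb (r1, r2)"
      by (simp add: algebra_simps)
    then show ?thesis
      using r1(1) r2(1) by blast
  qed
  have "q ^ n = card (UNIV :: 'a set)"
    by (simp add: card_field)
  also have "\<dots> \<le> card (?comb ` (?F \<times> ?F))"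
    using cover by (intro card_mono) auto
  also have "\<dots> \<le> card (?F \<times> ?F)"
    by (rule card_image_le) simp
  also have "\<dots> = card ?F * card ?F"
    by (rule card_cartesian_product)
  also have "\<dots> \<le> q * q"
    using card_subfield_Fq_le[where 'a = 'a, OF q_ge_2] by (simp add: mult_le_mono)
  also have "\<dots> = q ^ 2"
    by (simp add: power2_eq_square)
  finally show ?thesis
    using q_ge_2 by (simp add: power_le_imp_le_exp)
qed

end

section \<open>Scattered polynomials in standard form\<close>

lemma t_idx_dvd: "t_idx n b dvd n"
  unfolding t_idx_def Delta_def by (rule Gcd_dvd) simp

lemma t_idx_index_cong:
  assumes "i < n" "j < n" "b i \<noteq> (0::'a::field)" "b j \<noteq> 0"
  shows "i mod t_idx n b = j mod t_idx n b"
proof (cases "i = j")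
  case False
  then have "(i + n - j) mod n \<in> Delta n b"
    using assms unfolding Delta_def by auto
  then have "t_idx n b dvd (i + n - j) mod n"
    unfolding t_idx_def by (rule Gcd_dvd)
  then have "t_idx n b dvd i + n - j"
    by (simp add: dvd_mod_iff[OF t_idx_dvd])
  then have "(i + n) mod t_idx n b = j mod t_idx n b"
    using assms(2) by (simp add: mod_eq_dvd_iff_nat)
  moreover have "(i + n) mod t_idx n b = i mod t_idx n b"
    using t_idx_dvd[of n b] by (metis mod_add_right_eq dvd_imp_mod_0 add.right_neutral)
  ultimately show ?thesis
    by simp
qed simp

locale scattered_standard = qn_field q n field_type
  for q n :: nat and field_type :: "'a::{finite,field} itself" +
  fixes b :: "nat \<Rightarrow> 'a"
  assumes scattered: "scattered q n b" and standard: "standard_form n b"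
begin

abbreviation H :: "'a \<Rightarrow> 'a" where "H \<equiv> qpoly_eval q n b"

abbreviation t :: nat where "t \<equiv> t_idx n b"

definition s :: nat where "s = (SOME i. i < n \<and> b i \<noteq> 0)"

lemma scatteredD: "z * H y - y * H z = 0 \<Longrightarrow> Fq_lin_dep q y z"
  using scattered unfolding scattered_def by blast

lemma commuting_scalar_in_Fq:
  assumes "\<And>x. H (l * x) = l * H x"
  shows "l \<in> subfield_Fq q"
proof -
  have "Fq_lin_dep q l 1"
    using assms[of 1] by (intro scatteredD) simp
  then show ?thesis
    using Fq_lin_dep_imp_multiple[of l 1] by auto
qed

lemma exists_nonzero_coeff: "\<exists>i<n. b i \<noteq> 0"
proof (rule ccontr)
  assume "\<not> ?thesis"
  then have "H x = 0" for x
    unfolding qpoly_eval_def by simp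
  then have "l \<in> subfield_Fq q" for l :: 'a
    by (intro commuting_scalar_in_Fq) simp
  moreover obtain l :: 'a where "l \<notin> subfield_Fq q"
    using exists_in_subfield_not_Fq[of n] n_gt_1 by auto
  ultimately show False
    by blast
qed

lemma s_less_n: "s < n" and b_s_nonzero: "b s \<noteq> 0"
  using someI_ex[OF exists_nonzero_coeff] unfolding s_def by auto

lemma t_dvd_n: "t dvd n"
  by (rule t_idx_dvd)

lemma t_ge_2: "t \<ge> 2"
  using standard unfolding standard_form_def by simp

lemma semilinear:
  assumes "l \<in> subfield_Fq (q ^ t)"
  shows "H (l * x) = l ^ (q ^ s) * H x"
proof -
  have "b i * (l * x) ^ (q ^ i) = l ^ (q ^ s) * (b i * x ^ (q ^ i))" if "i < n" for i
  proof (cases "b i = 0")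
    case False
    then have "i mod t = s mod t"
      using t_idx_index_cong s_less_n b_s_nonzero that by blast
    then have "l ^ (q ^ i) = l ^ (q ^ s)"
      using subfield_Fq_power_mod[OF assms] by metis
    then show ?thesis
      by (simp add: power_mult_distrib mult_ac)
  qed simp
  then show ?thesis
    unfolding qpoly_eval_def sum_distrib_left by (intro sum.cong) auto
qed

lemma fixed_scalar_in_Fq:
  assumes "(l::'a) \<in> subfield_Fq (q ^ t)" "l ^ (q ^ s) = l"
  shows "l \<in> subfield_Fq q"
  using semilinear[OF assms(1)] assms(2) by (intro commuting_scalar_in_Fq) simp

lemma exists_unfixed_scalar: "\<exists>l::'a \<in> subfield_Fq (q ^ t). l ^ (q ^ s) \<noteq> l"
proof -
  obtain l :: 'a where "l \<in> subfield_Fq (q ^ t)" "l \<notin> subfield_Fq q"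
    using exists_in_subfield_not_Fq[OF t_dvd_n t_ge_2] by blast
  then show ?thesis
    using fixed_scalar_in_Fq by blast
qed

lemma H_eq_0_iff: "H x = 0 \<longleftrightarrow> x = 0"
proof
  assume "H x = 0"
  obtain l :: 'a where l: "l \<in> subfield_Fq (q ^ t)" "l ^ (q ^ s) \<noteq> l"
    using exists_unfixed_scalar by blast
  then have "H (l * x) = 0"
    using semilinear \<open>H x = 0\<close> by simp
  then have "Fq_lin_dep q (l * x) x"
    using \<open>H x = 0\<close> by (intro scatteredD) simp
  show "x = 0"
  proof (rule ccontr)
    assume "x \<noteq> 0"
    then obtain r where "r \<in> subfield_Fq q" "l * x = r * x"
      using Fq_lin_dep_imp_multiple \<open>Fq_lin_dep q (l * x) x\<close> by blast
    then have "l \<in> subfield_Fq q"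
      using \<open>x \<noteq> 0\<close> by simp
    then show False
      using l(2) power_power_fixed[of l q s] by (simp add: subfield_Fq_def)
  qed
qed (simp add: qpoly_eval_zero)

lemma bij_H: "bij H"
proof -
  have "inj H"
  proof (rule injI)
    fix x y assume "H x = H y"
    then have "H (x - y) = 0"
      by (simp add: qpoly_eval_diff)
    then show "x = y"
      by (simp add: H_eq_0_iff)
  qed
  then show ?thesis
    by (simp add: bij_def finite_UNIV_inj_surj)
qed

lemma coprime_s_t: "coprime s t"
proof (rule ccontr)
  define d where "d = gcd s t"
  assume "\<not> coprime s t"
  then have "d \<noteq> 1"
    unfolding d_def by (simp add: coprime_iff_gcd_eq_1)
  moreover have "d > 0"
    using t_ge_2 unfolding d_def by simp
  ultimately have "d \<ge> 2"
    by simp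
  moreover have "d dvd t" "d dvd s"
    unfolding d_def by simp_all
  moreover from \<open>d dvd t\<close> have "d dvd n"
    using t_dvd_n by (rule dvd_trans)
  ultimately obtain l :: 'a where l: "l \<in> subfield_Fq (q ^ d)" "l \<notin> subfield_Fq q"
    using exists_in_subfield_not_Fq by blast
  have "l \<in> subfield_Fq (q ^ t)"
    using l(1) subfield_Fq_mono[OF \<open>d dvd t\<close>] by blast
  moreover have "l ^ (q ^ s) = l"
    using l(1) subfield_Fq_mono[OF \<open>d dvd s\<close>] by (auto simp: subfield_Fq_def)
  ultimately show False
    using fixed_scalar_in_Fq l(2) by blast
qed

lemma t_eq_2_if_involutive:
  assumes "\<And>l::'a. l \<in> subfield_Fq (q ^ t) \<Longrightarrow> (l ^ (q ^ s)) ^ (q ^ s) = l"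
  shows "t = 2" "odd s"
proof -
  have "(l ^ (q ^ s)) ^ (q ^ s) = l ^ (q ^ (2 * s))" for l :: 'a
    by (simp add: power_mult mult_2 power_add)
  then have "subfield_Fq (q ^ t) \<subseteq> (subfield_Fq (q ^ (2 * s)) :: 'a set)"
    using assms by (auto simp: subfield_Fq_def)
  then have "t dvd 2 * s"
    using subfield_Fq_subset_imp_dvd t_dvd_n t_ge_2 by simp
  then have "t dvd 2"
    using coprime_dvd_mult_left_iff[of t s 2] coprime_s_t by (simp add: coprime_commute)
  then show "t = 2"
    using dvd_imp_le[of t 2] t_ge_2 by simp
  then show "odd s"
    using coprime_s_t by simp
qed

lemma eigenvectors_collinear: "H y = c * y \<Longrightarrow> H z = c * z \<Longrightarrow> Fq_lin_dep q y z"
  by (intro scatteredD) (simp add: mult_ac)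

lemma antidiagonal_involutive:
  assumes "c \<noteq> 0" and J: "\<And>x. H (g * H x) = c * x" and l: "(l::'a) \<in> subfield_Fq (q ^ t)"
  shows "(l ^ (q ^ s)) ^ (q ^ s) = l"
proof -
  have "c * l = H (l ^ (q ^ s) * (g * H 1))"
    using J[of l] semilinear[OF l, of 1] by (simp add: mult_ac)
  also have "\<dots> = (l ^ (q ^ s)) ^ (q ^ s) * c"
    using semilinear[OF subfield_Fq_power_closed[OF l]] J[of 1] by simp
  finally show ?thesis
    using \<open>c \<noteq> 0\<close> by (simp add: mult.commute)
qed

lemma no_eigen_combination:
  assumes "n \<ge> 3" "g \<noteq> 0"
  shows "\<not> (\<forall>x. H (l * x + g * H x) = \<kappa> * (l * x + g * H x))"
proof
  assume eigen: "\<forall>x. H (l * x + g * H x) = \<kappa> * (l * x + g * H x)"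
  define \<phi> where "\<phi> x = l * x + g * H x" for x
  have kernel: "H x = (- l / g) * x" if "\<phi> x = 0" for x
  proof -
    have "g * H x = - (l * x)"
      using that unfolding \<phi>_def eq_neg_iff_add_eq_0 by (simp add: add.commute)
    then show ?thesis
      using \<open>g \<noteq> 0\<close> by (simp add: field_simps)
  qed
  have "n \<le> 2"
  proof (rule n_le_2_if_kernel_and_image_collinear)
    show "\<phi> (x - y) = \<phi> x - \<phi> y" for x y
      unfolding \<phi>_def by (simp add: qpoly_eval_diff algebra_simps)
    show "\<phi> (r * x) = r * \<phi> x" if "r \<in> subfield_Fq q" for r x
      unfolding \<phi>_def using that by (simp add: qpoly_eval_Fq_mult algebra_simps)
    show "Fq_lin_dep q (\<phi> x) (\<phi> y)" for x y
      using eigen unfolding \<phi>_def by (intro eigenvectors_collinear[where c = \<kappa>]) simp_all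
    show "Fq_lin_dep q x y" if "\<phi> x = 0" "\<phi> y = 0" for x y
      using kernel that by (intro eigenvectors_collinear)
  qed
  then show False
    using assms(1) by simp
qed

lemma antidiagonal_imp_eigen_combination:
  assumes "c \<noteq> 0" "g \<noteq> 0" and J: "\<And>x. H (g * H x) = c * x"
  shows "\<exists>l \<kappa>. \<forall>x. H (l * x + g * H x) = \<kappa> * (l * x + g * H x)"
proof -
  have "t = 2" "odd s"
    using t_eq_2_if_involutive antidiagonal_involutive[OF \<open>c \<noteq> 0\<close> J] by blast+
  have "H (c * g * x) = c * g * H x" for x
    using J[of "g * H x"] J[of x] by (simp add: mult_ac)
  then have "c * g \<in> subfield_Fq q"
    by (rule commuting_scalar_in_Fq)
  moreover have "2 dvd n"
    using t_dvd_n \<open>t = 2\<close> by simp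
  ultimately obtain l where l: "l \<in> subfield_Fq (q ^ 2)" "l ^ (q + 1) = c * g"
    using norm_onto_Fq assms(1,2) by (metis mult_eq_0_iff)
  then have "l \<noteq> 0"
    using assms(1,2) by auto
  have "l ^ (q ^ s) = l ^ q"
    using subfield_Fq_power_mod[OF l(1), of s] \<open>odd s\<close> by (simp add: odd_iff_mod_2_eq_one)
  then have Hl: "H (l * x) = l ^ q * H x" for x
    using semilinear l(1) \<open>t = 2\<close> by simp
  have "l ^ q * l = c * g"
    using l(2) by (simp add: power_add mult.commute)
  then have lq: "l ^ q = c * g / l"
    using \<open>l \<noteq> 0\<close> by (simp add: field_simps)
  have "H (l * x + g * H x) = (c / l) * (l * x + g * H x)" for x
  proof -
    have "H (l * x + g * H x) = l ^ q * H x + c * x"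
      using Hl J by (simp add: qpoly_eval_add)
    also have "\<dots> = (c / l) * (l * x + g * H x)"
      using \<open>l \<noteq> 0\<close> by (simp add: lq field_simps)
    finally show ?thesis .
  qed
  then show ?thesis
    by blast
qed

lemma antidiagonal_stabilizer_trivial:
  assumes "n \<ge> 3" and J: "\<And>x. H (g * H x) = c * x"
  shows "g = 0 \<and> c = 0"
proof (rule ccontr)
  assume nontrivial: "\<not> (g = 0 \<and> c = 0)"
  have "c \<noteq> 0"
  proof
    assume "c = 0"
    then have "g * H 1 = 0"
      using J[of 1] H_eq_0_iff by simp
    then show False
      using nontrivial \<open>c = 0\<close> H_eq_0_iff[of 1] by simp
  qed
  moreover have "g \<noteq> 0"
    using J[of 1] \<open>c \<noteq> 0\<close> qpoly_eval_zero by auto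
  ultimately show False
    using antidiagonal_imp_eigen_combination[OF _ _ J] no_eigen_combination[OF assms(1)] by blast
qed

lemma stabilizer_is_diagonal:
  assumes "n \<ge> 3" and stab: "\<And>x. H (x * \<alpha> + H x * \<gamma>) = x * \<beta> + H x * \<delta>"
  shows "\<beta> = 0 \<and> \<gamma> = 0"
proof -
  obtain l :: 'a where l: "l \<in> subfield_Fq (q ^ t)" "l ^ (q ^ s) \<noteq> l"
    using exists_unfixed_scalar by blast
  define l' where "l' = l ^ (q ^ s)"
  have Hl: "H (l * x) = l' * H x" for x
    using semilinear[OF l(1)] by (simp add: l'_def)
  \<comment> \<open>the stabiliser equation at \<open>l * x\<close> minus \<open>l'\<close> times the one at \<open>x\<close>\<close>
  have "H ((l' - l) * \<gamma> * H x) = (l - l') * \<beta> * x" for x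
  proof -
    have "(l' - l) * \<gamma> * H x = (l * x * \<alpha> + H (l * x) * \<gamma>) - l * (x * \<alpha> + H x * \<gamma>)"
      by (simp add: Hl algebra_simps)
    then have "H ((l' - l) * \<gamma> * H x) = H (l * x * \<alpha> + H (l * x) * \<gamma>) - H (l * (x * \<alpha> + H x * \<gamma>))"
      by (simp add: qpoly_eval_diff)
    also have "\<dots> = (l * x * \<beta> + H (l * x) * \<delta>) - l' * (x * \<beta> + H x * \<delta>)"
      by (simp only: stab Hl[of "x * \<alpha> + H x * \<gamma>"])
    finally show ?thesis
      by (simp add: Hl algebra_simps)
  qed
  then have "(l' - l) * \<gamma> = 0 \<and> (l - l') * \<beta> = 0"
    by (rule antidiagonal_stabilizer_trivial[OF assms(1)])
  moreover have "l' - l \<noteq> 0" "l - l' \<noteq> 0"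
    using l(2) by (simp_all add: l'_def)
  ultimately show ?thesis
    by simp
qed

lemma diagonal_stabilizer_exists: "\<exists>\<mu> \<nu>. \<mu> \<noteq> \<nu> \<and> (\<forall>x. H (x * \<mu>) = H x * \<nu>)"
proof -
  obtain l :: 'a where l: "l \<in> subfield_Fq (q ^ t)" "l ^ (q ^ s) \<noteq> l"
    using exists_unfixed_scalar by blast
  then have "\<forall>x. H (x * l) = H x * l ^ (q ^ s)"
    using semilinear[OF l(1)] by (simp add: mult.commute)
  then show ?thesis
    using l(2) by metis
qed

lemma monomial_if_n_eq_2:
  assumes "n = 2"
  shows "b 1 \<noteq> 0" "H x = b 1 * x ^ q"
proof -
  have "t = 2"
    using t_dvd_n t_ge_2 dvd_imp_le[of t 2] assms by simp
  have "s \<noteq> 0"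
  proof
    assume "s = 0"
    then show False
      using exists_unfixed_scalar by simp
  qed
  then have "s = 1"
    using s_less_n assms by simp
  then show "b 1 \<noteq> 0"
    using b_s_nonzero by simp
  have "b 0 = 0"
  proof (rule ccontr)
    assume "b 0 \<noteq> 0"
    then have "0 mod t = 1 mod t"
      using t_idx_index_cong[of 0 n 1 b] \<open>b 1 \<noteq> 0\<close> assms by simp
    then show False
      using \<open>t = 2\<close> by simp
  qed
  then show "H x = b 1 * x ^ q"
    unfolding qpoly_eval_def assms by (simp add: numeral_2_eq_2)
qed

end

section \<open>GL-equivalence\<close>

(* A 4-tuple (a, b, c, d) is the matrix [[a, b], [c, d]], acting on row vectors as in mat_act. *)
definition mat_mult :: "'a::field \<times> 'a \<times> 'a \<times> 'a \<Rightarrow> 'a \<times> 'a \<times> 'a \<times> 'a \<Rightarrow> 'a \<times> 'a \<times> 'a \<times> 'a" where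
  "mat_mult M N = (case M of (a, b, c, d) \<Rightarrow> case N of (a', b', c', d') \<Rightarrow>
     (a * a' + b * c', a * b' + b * d', c * a' + d * c', c * b' + d * d'))"

definition mat_det :: "'a::field \<times> 'a \<times> 'a \<times> 'a \<Rightarrow> 'a" where
  "mat_det M = (case M of (a, b, c, d) \<Rightarrow> a * d - b * c)"

definition mat_inverse :: "'a::field \<times> 'a \<times> 'a \<times> 'a \<Rightarrow> 'a \<times> 'a \<times> 'a \<times> 'a" where
  "mat_inverse M = (case M of (a, b, c, d) \<Rightarrow>
     (d / mat_det M, - b / mat_det M, - c / mat_det M, a / mat_det M))"

lemma mat_act_mult: "mat_act (mat_mult M N) v = mat_act N (mat_act M v)"
  by (cases M, cases N, cases v) (simp add: mat_mult_def mat_act_def algebra_simps)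

lemma mat_det_mult: "mat_det (mat_mult M N) = mat_det M * mat_det N"
  by (cases M, cases N) (simp add: mat_mult_def mat_det_def algebra_simps)

lemma mat_det_inverse: "mat_det (mat_inverse M) = inverse (mat_det M)"
proof -
  obtain a b c d where M: "M = (a, b, c, d)"
    by (cases M) auto
  define D where "D = mat_det M"
  have "mat_det (mat_inverse M) = d / D * (a / D) - - b / D * (- c / D)"
    by (simp add: M mat_inverse_def mat_det_def D_def)
  also have "\<dots> = (a * d - b * c) / (D * D)"
    by (simp add: diff_divide_distrib mult.commute)
  also have "\<dots> = D / (D * D)"
    by (simp add: M D_def mat_det_def)
  also have "\<dots> = inverse D"
    by (cases "D = 0") (simp_all add: field_simps)
  finally show ?thesis
    unfolding D_def .
qed

lemma mat_act_inverse:
  assumes "mat_det M \<noteq> 0"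
  shows "mat_act (mat_inverse M) (mat_act M v) = v"
proof -
  obtain a b c d where M: "M = (a, b, c, d)"
    by (cases M) auto
  obtain u w where v: "v = (u, w)"
    by (cases v) auto
  define D where "D = mat_det M"
  have D: "mat_det (a, b, c, d) = D" "a * d - b * c = D" "D \<noteq> 0"
    using assms by (simp_all add: D_def M mat_det_def)
  have "(u * a + w * c) * (d / D) + (u * b + w * d) * (- c / D) = u * (a * d - b * c) / D"
    using D(3) by (simp add: field_simps)
  moreover have "(u * a + w * c) * (- b / D) + (u * b + w * d) * (a / D) = w * (a * d - b * c) / D"
    using D(3) by (simp add: field_simps)
  ultimately show ?thesis
    using D by (simp add: M v mat_inverse_def mat_act_def)
qed

lemma mat_act_inverse_image:
  assumes "mat_det M \<noteq> 0" "mat_act M ` U = U'"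
  shows "mat_act (mat_inverse M) ` U' = U"
  using assms by (auto simp: image_image mat_act_inverse)

lemma conjugate_diagonal:
  "mat_mult (mat_mult (a, b, c, d) (\<mu>, 0, 0, \<nu>)) (mat_inverse (a, b, c, d)) =
     ((a * d * \<mu> - b * c * \<nu>) / (a * d - b * c), a * b * (\<nu> - \<mu>) / (a * d - b * c),
      c * d * (\<mu> - \<nu>) / (a * d - b * c), (a * d * \<nu> - b * c * \<mu>) / (a * d - b * c))"
  by (simp add: mat_mult_def mat_inverse_def mat_det_def add_divide_distrib diff_divide_distrib algebra_simps)

lemma GL_equiv_iff: "GL_equiv q n f g \<longleftrightarrow> (\<exists>M. mat_det M \<noteq> 0 \<and> mat_act M ` U_set q n f = U_set q n g)"
  unfolding GL_equiv_def mat_det_def by auto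

lemma GL_equiv_sym:
  assumes "GL_equiv q n f g"
  shows "GL_equiv q n g f"
proof -
  obtain M where "mat_det M \<noteq> 0" "mat_act M ` U_set q n f = U_set q n g"
    using assms unfolding GL_equiv_iff by blast
  then have "mat_det (mat_inverse M) \<noteq> 0" "mat_act (mat_inverse M) ` U_set q n g = U_set q n f"
    by (simp_all add: mat_det_inverse mat_act_inverse_image)
  then show ?thesis
    unfolding GL_equiv_iff by blast
qed

lemma GL_equiv_trans:
  assumes "GL_equiv q n f g" "GL_equiv q n g h"
  shows "GL_equiv q n f h"
proof -
  obtain M N where "mat_det M \<noteq> 0" "mat_act M ` U_set q n f = U_set q n g"
    and "mat_det N \<noteq> 0" "mat_act N ` U_set q n g = U_set q n h"
    using assms unfolding GL_equiv_iff by blast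
  moreover have "mat_act (mat_mult M N) = mat_act N \<circ> mat_act M"
    by (rule ext) (simp add: mat_act_mult)
  ultimately have "mat_det (mat_mult M N) \<noteq> 0" "mat_act (mat_mult M N) ` U_set q n f = U_set q n h"
    by (simp add: mat_det_mult, metis image_comp)
  then show ?thesis
    unfolding GL_equiv_iff by blast
qed

lemma mem_U_set: "(u, v) \<in> U_set q n f \<longleftrightarrow> v = qpoly_eval q n f u"
  by (auto simp: U_set_def)

lemma mat_act_U_set_subset_iff:
  "mat_act (a, b, c, d) ` U_set q n f \<subseteq> U_set q n g \<longleftrightarrow>
     (\<forall>x. qpoly_eval q n g (x * a + qpoly_eval q n f x * c) = x * b + qpoly_eval q n f x * d)"
proof -
  have "U_set q n f = range (\<lambda>x. (x, qpoly_eval q n f x))"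
    by (auto simp: U_set_def)
  then have "mat_act (a, b, c, d) ` U_set q n f =
      range (\<lambda>x. (x * a + qpoly_eval q n f x * c, x * b + qpoly_eval q n f x * d))"
    by (simp add: image_image mat_act_def)
  then show ?thesis
    by (auto simp: image_subset_iff mem_U_set)
qed

lemma GL_equiv_diagonal_or_antidiagonal:
  fixes h h' :: "nat \<Rightarrow> 'a::{finite,field}"
  assumes "scattered_standard q n h" "scattered_standard q n h'" "n \<ge> 3"
    and det: "a * d - b * c \<noteq> 0" and A: "mat_act (a, b, c, d) ` U_set q n h = U_set q n h'"
  shows "(b = 0 \<and> c = 0) \<or> (a = 0 \<and> d = 0)"
proof -
  interpret h: scattered_standard q n "TYPE('a)" h by fact
  interpret h': scattered_standard q n "TYPE('a)" h' by fact
  obtain \<mu> \<nu> :: 'a where "\<mu> \<noteq> \<nu>" and D: "\<forall>x. h'.H (x * \<mu>) = h'.H x * \<nu>"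
    using h'.diagonal_stabilizer_exists by blast
  let ?A = "(a, b, c, d)" and ?D = "(\<mu>, 0, 0, \<nu>)"
  let ?N = "mat_mult (mat_mult ?A ?D) (mat_inverse ?A)"
  have D_stab: "mat_act ?D ` U_set q n h' \<subseteq> U_set q n h'"
    using D unfolding mat_act_U_set_subset_iff by simp
  have "mat_det ?A \<noteq> 0"
    using det by (simp add: mat_det_def)
  then have "mat_act (mat_inverse ?A) ` U_set q n h' = U_set q n h"
    using A by (rule mat_act_inverse_image)
  then have "mat_act (mat_inverse ?A) ` mat_act ?D ` U_set q n h' \<subseteq> U_set q n h"
    using image_mono[OF D_stab, of "mat_act (mat_inverse ?A)"] by simp
  then have "mat_act (mat_inverse ?A) ` mat_act ?D ` mat_act ?A ` U_set q n h \<subseteq> U_set q n h"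
    unfolding A .
  then have "mat_act ?N ` U_set q n h \<subseteq> U_set q n h"
    by (simp add: mat_act_mult image_image)
  then have "a * b * (\<nu> - \<mu>) / (a * d - b * c) = 0 \<and> c * d * (\<mu> - \<nu>) / (a * d - b * c) = 0"
    unfolding conjugate_diagonal mat_act_U_set_subset_iff using h.stabilizer_is_diagonal[OF \<open>n \<ge> 3\<close>] by blast
  then have "a * b = 0" "c * d = 0"
    using \<open>\<mu> \<noteq> \<nu>\<close> det by auto
  then show ?thesis
    using det by auto
qed

lemma diagonal_graph_map:
  assumes "mat_act (a, 0, 0, d) ` U_set q n h \<subseteq> U_set q n h'" "a \<noteq> 0"
  shows "qpoly_eval q n h' x = d * qpoly_eval q n h (inverse a * x)"
proof -
  have "qpoly_eval q n h' (y * a) = qpoly_eval q n h y * d" for y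
    using assms(1) unfolding mat_act_U_set_subset_iff by simp
  moreover have "inverse a * x * a = x"
    using assms(2) by (simp add: field_simps)
  ultimately show ?thesis
    by (metis mult.commute)
qed

lemma antidiagonal_graph_map:
  assumes "mat_act (0, b, c, 0) ` U_set q n h \<subseteq> U_set q n h'" "c \<noteq> 0" "surj (qpoly_eval q n h)"
  shows "qpoly_eval q n h' x = b * inv (qpoly_eval q n h) (inverse c * x)"
proof -
  let ?y = "inv (qpoly_eval q n h) (inverse c * x)"
  have "qpoly_eval q n h ?y = inverse c * x"
    using assms(3) by (rule surj_f_inv_f)
  moreover have "qpoly_eval q n h' (qpoly_eval q n h y * c) = y * b" for y
    using assms(1) unfolding mat_act_U_set_subset_iff by simp
  moreover have "inverse c * x * c = x"
    using assms(2) by (simp add: field_simps)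
  ultimately show ?thesis
    by (metis mult.commute)
qed

lemma scaled_if_n_eq_2:
  fixes h h' :: "nat \<Rightarrow> 'a::{finite,field}"
  assumes "scattered_standard q n h" "scattered_standard q n h'" "n = 2"
  shows "\<exists>a \<noteq> 0. \<forall>x. qpoly_eval q n h' x = a * qpoly_eval q n h x"
proof -
  interpret h: scattered_standard q n "TYPE('a)" h by fact
  interpret h': scattered_standard q n "TYPE('a)" h' by fact
  have "h 1 \<noteq> 0" "h' 1 \<noteq> 0"
    using h.monomial_if_n_eq_2(1) h'.monomial_if_n_eq_2(1) \<open>n = 2\<close> by blast+
  moreover have "h'.H x = (h' 1 / h 1) * h.H x" for x
    using h.monomial_if_n_eq_2(2) h'.monomial_if_n_eq_2(2) \<open>n = 2\<close> \<open>h 1 \<noteq> 0\<close> by simp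
  ultimately show ?thesis
    by (intro exI[of _ "h' 1 / h 1"]) simp
qed

lemma GL_equiv_scaled_or_inverse:
  fixes h h' :: "nat \<Rightarrow> 'a::{finite,field}"
  assumes h: "scattered_standard q n h" and h': "scattered_standard q n h'" and "n \<ge> 3"
    and "GL_equiv q n h h'"
  shows "\<exists>a b. a \<noteq> 0 \<and> b \<noteq> 0 \<and>
           ((\<forall>x. qpoly_eval q n h' x = a * qpoly_eval q n h (b * x)) \<or>
            (\<forall>x. qpoly_eval q n h' x = a * inv (qpoly_eval q n h) (b * x)))"
proof -
  obtain a b c d where det: "a * d - b * c \<noteq> 0"
    and A: "mat_act (a, b, c, d) ` U_set q n h = U_set q n h'"
    using \<open>GL_equiv q n h h'\<close> unfolding GL_equiv_def by blast
  from GL_equiv_diagonal_or_antidiagonal[OF h h' \<open>n \<ge> 3\<close> det A]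
  show ?thesis
  proof
    assume "b = 0 \<and> c = 0"
    then have "a \<noteq> 0" "d \<noteq> 0" "mat_act (a, 0, 0, d) ` U_set q n h \<subseteq> U_set q n h'"
      using det A by auto
    then show ?thesis
      using diagonal_graph_map[of a d q n h h'] by (intro exI[of _ d] exI[of _ "inverse a"]) simp
  next
    assume "a = 0 \<and> d = 0"
    then have "b \<noteq> 0" "c \<noteq> 0" "mat_act (0, b, c, 0) ` U_set q n h \<subseteq> U_set q n h'"
      using det A by auto
    moreover have "surj (qpoly_eval q n h)"
      using scattered_standard.bij_H[OF h] by (rule bij_is_surj)
    ultimately show ?thesis
      using antidiagonal_graph_map[of b c q n h h'] by (intro exI[of _ b] exI[of _ "inverse c"]) simp
  qed
qed

theorem proposition4p8:
  fixes q n :: nat and f h h' :: "nat \<Rightarrow> 'a::{finite,field}"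
  assumes "prime_power q" and "n > 1" and "CARD('a) = q ^ n"
    and "scattered q n f"
    and "scattered q n h" and "standard_form n h"
    and "scattered q n h'" and "standard_form n h'"
    and "GL_equiv q n h f" and "GL_equiv q n h' f"
  shows "\<exists>a b. a \<noteq> 0 \<and> b \<noteq> 0 \<and>
           ((\<forall>x. qpoly_eval q n h' x = a * qpoly_eval q n h (b * x)) \<or>
            (\<forall>x. qpoly_eval q n h' x = a * inv (qpoly_eval q n h) (b * x)))"
proof -
  have h: "scattered_standard q n h" and h': "scattered_standard q n h'"
    using assms by (simp_all add: scattered_standard_def scattered_standard_axioms_def qn_field_def)
  show ?thesis
  proof (cases "n = 2")
    case True
    then obtain a where "a \<noteq> 0" "\<forall>x. qpoly_eval q n h' x = a * qpoly_eval q n h x"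
      using scaled_if_n_eq_2[OF h h'] by blast
    then show ?thesis
      by (intro exI[of _ a] exI[of _ 1]) simp
  next
    case False
    then have "n \<ge> 3"
      using \<open>n > 1\<close> by simp
    moreover have "GL_equiv q n h h'"
      using assms(9,10) GL_equiv_sym GL_equiv_trans by blast
    ultimately show ?thesis
      using GL_equiv_scaled_or_inverse[OF h h'] by blast
  qed
qed

end
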